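(* Let $X,Y\in\mathcal{P}$ be partitions of a dataset $\mathcal{Z}$ with $m$ elements. The matrix $\mathbf{C}(X,Y)=(m_{pq})_{p,q\in\{0,1\}}$ satisfies: (1) if $X,Y\in\mathcal{P}^+$, then $\mathbf{C}^+(X,Y)=\mathbf{C}(X,Y)$; (2) $m_{pq}\ge0$ for all $p,q\in\{0,1\}$; (3) $\sum_{p,q}m_{pq}=N$, where $N=m(m-1)/2$.
   Context: Let $\mathcal{Z}=\{z_1,\dots,z_m\}$, $1\le\ell\le m$, $\mathcal{X} = \{\mathbf{X}\in[0,1]^{\ell\times m} : \mathbf{X}^T\mathbf{1}_\ell = \mathbf{1}_m\}$, and let $\mathcal{P}=\mathcal{X}/\Pi$ be the set of orbits $X=\{\mathbf{P}\mathbf{X}:\mathbf{P}$ an $\ell\times\ell$ permutation matrix$\}$ (partitions); entry $x_{kj}$ is the membership of $z_j$ in cluster $k$. $\mathcal{P}^+$ is the set of hard partitions, those represented by matrices in $\{0,1\}^{\ell\times m}$; a hard partition $X$ induces the relation $z\sim_X z'$ iff $z,z'$ lie in the same cluster. For hard $X,Y$, $\mathbf{C}^+(X,Y)=(m^+_{pq})$ is the $2\times2$ matrix where $m^+_{11}$, $m^+_{10}$, $m^+_{01}$, $m^+_{00}$ count the 2-element subsets $\{z,z'\}\subseteq\mathcal{Z}$ with, respectively, ($z\sim_Xz'$, $z\sim_Yz'$), ($z\sim_Xz'$, $z\not\sim_Yz'$), ($z\not\sim_Xz'$, $z\sim_Yz'$), ($z\not\sim_Xz'$, $z\not\sim_Yz'$).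 For any $X\in\mathcal{P}$ the compatibility matrix is $\mathbf{C}_X=\mathbf{X}^T\mathbf{X}$ for any representative $\mathbf{X}\in X$. For $m\times m$ matrices $\mathbf{A}=(a_{rs}),\mathbf{B}=(b_{rs})$ let $\chi(\mathbf{A},\mathbf{B})=\sum_{r=1}^m\sum_{s=r+1}^m a_{rs}b_{rs}$, and let $\mathbf{1}$ be the $m\times m$ all-ones matrix. Define $\mathbf{C}(X,Y)=(m_{pq})$ by $m_{11}=\chi(\mathbf{C}_X,\mathbf{C}_Y)$, $m_{10}=\chi(\mathbf{C}_X,\mathbf{1}-\mathbf{C}_Y)$, $m_{01}=\chi(\mathbf{1}-\mathbf{C}_X,\mathbf{C}_Y)$, $m_{00}=\chi(\mathbf{1}-\mathbf{C}_X,\mathbf{1}-\mathbf{C}_Y)$. *)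

theory Defs
  imports Complex_Main
begin

text \<open>Dataset Z = {z_0,...,z_(m-1)} is identified with the index set {0..<m}.
An l x m matrix is a function nat => nat => real, entry X k j = membership of z_j
in cluster k (k < l, j < m).  A partition (orbit under row permutations) is
handled through an arbitrary representative matrix; all notions below are
invariant under row permutation.\<close>

definition partition_matrix :: "nat \<Rightarrow> nat \<Rightarrow> (nat \<Rightarrow> nat \<Rightarrow> real) \<Rightarrow> bool" where
  "partition_matrix l m X \<longleftrightarrow>
     (\<forall>k<l. \<forall>j<m. 0 \<le> X k j \<and> X k j \<le> 1) \<and> (\<forall>j<m. (\<Sum>k<l. X k j) = 1)"

definition hard_partition_matrix :: "nat \<Rightarrow> nat \<Rightarrow> (nat \<Rightarrow> nat \<Rightarrow> real) \<Rightarrow> bool" where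
  "hard_partition_matrix l m X \<longleftrightarrow>
     partition_matrix l m X \<and> (\<forall>k<l. \<forall>j<m. X k j = 0 \<or> X k j = 1)"

definition same_cluster :: "nat \<Rightarrow> (nat \<Rightarrow> nat \<Rightarrow> real) \<Rightarrow> nat \<Rightarrow> nat \<Rightarrow> bool" where
  "same_cluster l X z z' \<longleftrightarrow> (\<exists>k<l. X k z = 1 \<and> X k z' = 1)"

definition compat :: "nat \<Rightarrow> (nat \<Rightarrow> nat \<Rightarrow> real) \<Rightarrow> nat \<Rightarrow> nat \<Rightarrow> real" where
  "compat l X r s = (\<Sum>k<l. X k r * X k s)"

definition chi :: "nat \<Rightarrow> (nat \<Rightarrow> nat \<Rightarrow> real) \<Rightarrow> (nat \<Rightarrow> nat \<Rightarrow> real) \<Rightarrow> real" where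
  "chi m A B = (\<Sum>r<m. \<Sum>s\<in>{r+1..<m}. A r s * B r s)"

text \<open>Index p = True stands for 1, p = False for 0.
 C(X,Y)_pq = chi(C_X or 1 - C_X, C_Y or 1 - C_Y).\<close>
definition Cmat :: "nat \<Rightarrow> nat \<Rightarrow> (nat \<Rightarrow> nat \<Rightarrow> real) \<Rightarrow> (nat \<Rightarrow> nat \<Rightarrow> real)
                     \<Rightarrow> bool \<Rightarrow> bool \<Rightarrow> real" where
  "Cmat l m X Y p q =
     chi m (\<lambda>r s. if p then compat l X r s else 1 - compat l X r s)
           (\<lambda>r s. if q then compat l Y r s else 1 - compat l Y r s)"

definition Cplus :: "nat \<Rightarrow> nat \<Rightarrow> (nat \<Rightarrow> nat \<Rightarrow> real) \<Rightarrow> (nat \<Rightarrow> nat \<Rightarrow> real)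
                     \<Rightarrow> bool \<Rightarrow> bool \<Rightarrow> nat" where
  "Cplus l m X Y p q =
     card {P. \<exists>z z'. P = {z, z'} \<and> z < m \<and> z' < m \<and> z \<noteq> z'
                  \<and> same_cluster l X z z' = p \<and> same_cluster l Y z z' = q}"

end

theory Submission
  imports Defs
begin

text \<open>Entries of a compatibility matrix are inner products of two columns of a column-stochastic
matrix, so they lie in [0,1], and for hard partitions they are the 0/1 indicators of the relation
"same cluster". Hence every entry of C(X,Y) is a chi-sum of nonnegative terms, and since chi is
bilinear the four entries add up to chi of the all-ones matrices, i.e. the number m(m-1)/2 of
strictly upper-triangular positions. For hard partitions each summand of m_pq is the indicator of
the pair (r,s), r < s, falling into class (p,q), and counting such ordered pairs is the same as
counting the 2-element subsets, since the relations involved are symmetric.\<close>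

lemma compat_nonneg:
  assumes "partition_matrix l m X" "r < m" "s < m"
  shows "0 \<le> compat l X r s"
  using assms unfolding partition_matrix_def compat_def by (auto intro!: sum_nonneg)

lemma compat_le_one:
  assumes "partition_matrix l m X" "r < m" "s < m"
  shows "compat l X r s \<le> 1"
proof -
  have "compat l X r s \<le> (\<Sum>k<l. X k r)"
    unfolding compat_def
    using assms unfolding partition_matrix_def by (intro sum_mono) (simp add: mult_left_le)
  also have "\<dots> = 1"
    using assms unfolding partition_matrix_def by simp
  finally show ?thesis .
qed

lemma compat_hard_partition:
  assumes "hard_partition_matrix l m X" "r < m" "s < m"
  shows "compat l X r s = (if same_cluster l X r s then 1 else 0)"
proof (cases "same_cluster l X r s")
  case True
  then obtain k where k: "k < l" "X k r = 1" "X k s = 1"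
    unfolding same_cluster_def by auto
  have pm: "partition_matrix l m X"
    using assms(1) unfolding hard_partition_matrix_def by simp
  have "X k r * X k s \<le> compat l X r s"
    unfolding compat_def
    using k pm assms(2,3) unfolding partition_matrix_def by (intro member_le_sum) auto
  with k True compat_le_one[OF pm assms(2,3)] show ?thesis by simp
next
  case False
  have "X k r * X k s = 0" if "k < l" for k
    using assms that False unfolding hard_partition_matrix_def same_cluster_def by force
  with False show ?thesis
    unfolding compat_def by (simp add: sum.neutral)
qed

lemma same_cluster_commute: "same_cluster l X r s = same_cluster l X s r"
  unfolding same_cluster_def by auto

lemma chi_nonneg:
  assumes "\<And>r s. r < s \<Longrightarrow> s < m \<Longrightarrow> 0 \<le> A r s"
    and "\<And>r s. r < s \<Longrightarrow> s < m \<Longrightarrow> 0 \<le> B r s"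
  shows "0 \<le> chi m A B"
  unfolding chi_def using assms by (intro sum_nonneg mult_nonneg_nonneg) auto

lemma chi_add_left: "chi m (\<lambda>r s. A r s + A' r s) B = chi m A B + chi m A' B"
  by (simp add: chi_def distrib_right sum.distrib)

lemma chi_add_right: "chi m A (\<lambda>r s. B r s + B' r s) = chi m A B + chi m A B'"
  by (simp add: chi_def distrib_left sum.distrib)

lemma chi_one_one: "chi m (\<lambda>_ _. 1) (\<lambda>_ _. 1) = real m * (real m - 1) / 2"
proof (induction m)
  case 0
  show ?case by (simp add: chi_def)
next
  case (Suc n)
  have "chi (Suc n) (\<lambda>_ _. 1) (\<lambda>_ _. 1) = chi n (\<lambda>_ _. 1) (\<lambda>_ _. 1) + real n"
    by (simp add: chi_def of_nat_diff sum_subtractf sum.distrib algebra_simps)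
  with Suc.IH show ?case by (simp add: field_simps)
qed

lemma chi_cong:
  assumes "\<And>r s. r < s \<Longrightarrow> s < m \<Longrightarrow> A r s = A' r s"
    and "\<And>r s. r < s \<Longrightarrow> s < m \<Longrightarrow> B r s = B' r s"
  shows "chi m A B = chi m A' B'"
  unfolding chi_def using assms by (intro sum.cong) auto

lemma chi_of_bool:
  "chi m (\<lambda>r s. of_bool (P r s)) (\<lambda>r s. of_bool (Q r s))
     = real (\<Sum>r<m. card {s \<in> {r+1..<m}. P r s \<and> Q r s})"
  unfolding chi_def of_bool_conj[symmetric] by (simp add: of_bool_def sum.If_cases Int_def)

lemma card_doubletons_eq_sum_card:
  fixes m :: nat
  assumes "\<And>a b. P a b = P b a"
  shows "card {D. \<exists>z z'. D = {z, z'} \<and> z < m \<and> z' < m \<and> z \<noteq> z' \<and> P z z'}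
           = (\<Sum>r<m. card {s \<in> {r+1..<m}. P r s})"
proof -
  define S where "S = Sigma {..<m} (\<lambda>r. {s \<in> {r+1..<m}. P r s})"
  have "{D. \<exists>z z'. D = {z, z'} \<and> z < m \<and> z' < m \<and> z \<noteq> z' \<and> P z z'} = (\<lambda>(r, s). {r, s}) ` S"
  proof (intro equalityI subsetI)
    fix D
    assume "D \<in> {D. \<exists>z z'. D = {z, z'} \<and> z < m \<and> z' < m \<and> z \<noteq> z' \<and> P z z'}"
    then obtain z z' where zz': "D = {z, z'}" "z < m" "z' < m" "z \<noteq> z'" "P z z'"
      by auto
    obtain r s where "D = {r, s}" "r < s" "s < m" "P r s"
      using zz' assms by (cases "z < z'") (auto simp: insert_commute intro: that)
    then show "D \<in> (\<lambda>(r, s). {r, s}) ` S"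
      unfolding S_def by force
  qed (force simp: S_def)
  moreover have "inj_on (\<lambda>(r, s). {r, s}) S"
    unfolding inj_on_def S_def by (auto simp: doubleton_eq_iff)
  ultimately show ?thesis
    by (simp add: card_image S_def card_SigmaI)
qed

lemma Cmat_nonneg:
  assumes "partition_matrix l m X" "partition_matrix l m Y"
  shows "0 \<le> Cmat l m X Y p q"
  unfolding Cmat_def
  using compat_nonneg[OF assms(1)] compat_le_one[OF assms(1)]
    compat_nonneg[OF assms(2)] compat_le_one[OF assms(2)]
  by (intro chi_nonneg) auto

lemma sum_Cmat:
  "(\<Sum>p\<in>{True, False}. \<Sum>q\<in>{True, False}. Cmat l m X Y p q) = chi m (\<lambda>_ _. 1) (\<lambda>_ _. 1)"
proof -
  have "(\<Sum>p\<in>{True, False}. \<Sum>q\<in>{True, False}. Cmat l m X Y p q)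
      = chi m (\<lambda>r s. compat l X r s + (1 - compat l X r s))
              (\<lambda>r s. compat l Y r s + (1 - compat l Y r s))"
    unfolding Cmat_def chi_add_left chi_add_right by simp
  then show ?thesis by simp
qed

lemma Cmat_hard_partition:
  assumes "hard_partition_matrix l m X" "hard_partition_matrix l m Y"
  shows "Cmat l m X Y p q
           = chi m (\<lambda>r s. of_bool (same_cluster l X r s = p)) (\<lambda>r s. of_bool (same_cluster l Y r s = q))"
  unfolding Cmat_def
  using compat_hard_partition[OF assms(1)] compat_hard_partition[OF assms(2)]
  by (intro chi_cong) auto

lemma Cplus_eq_Cmat:
  assumes "hard_partition_matrix l m X" "hard_partition_matrix l m Y"
  shows "real (Cplus l m X Y p q) = Cmat l m X Y p q"
proof -
  have "Cplus l m X Y p q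
      = (\<Sum>r<m. card {s \<in> {r+1..<m}. same_cluster l X r s = p \<and> same_cluster l Y r s = q})"
    unfolding Cplus_def
    using same_cluster_commute[of l X] same_cluster_commute[of l Y]
    by (intro card_doubletons_eq_sum_card) metis
  then show ?thesis
    unfolding Cmat_hard_partition[OF assms] chi_of_bool by simp
qed

theorem proposition1:
  fixes l m :: nat and X Y :: "nat \<Rightarrow> nat \<Rightarrow> real"
  assumes "1 \<le> l" and "l \<le> m"
    and "partition_matrix l m X" and "partition_matrix l m Y"
  shows "((hard_partition_matrix l m X \<and> hard_partition_matrix l m Y) \<longrightarrow>
            (\<forall>p q. real (Cplus l m X Y p q) = Cmat l m X Y p q))
       \<and> (\<forall>p q. Cmat l m X Y p q \<ge> 0)
       \<and> (\<Sum>p\<in>{True, False}. \<Sum>q\<in>{True, False}. Cmat l m X Y p q) = real m * (real m - 1) / 2"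
  using Cplus_eq_Cmat Cmat_nonneg[OF assms(3,4)] sum_Cmat chi_one_one by simp

end
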